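(* Let $M$ and $M'$ be models over the same signature. If $K$ and $K'$ are both least upper bounds of $\{M,M'\}$ with respect to subsumption $\sqsubseteq$, then $K$ and $K'$ are isomorphic.
   Context: Signature: finite set of types $\mathsf{TYPE}$, finite set of attributes $\mathsf{ATTR}$, relation symbols $\mathsf{REL}=\bigcup_{m>1}\mathsf{REL}_m$, a set $\mathsf{NNAME}$ of base-labels, a set $\mathsf{NVAR}$ of node variables and a set $\mathsf{WVAR}$ of wrapping variables (pairwise disjoint); node labels are $\mathsf{NLABEL}=\mathsf{NNAME}\uplus\mathsf{NVAR}$. A Feature Structure with Wrappings (FSW) is $F=\langle V,\mathcal W,\mathcal I\rangle$ where $V$ is a nonempty set of nodes, $\mathcal W$ is a set of pairwise disjoint nonempty subsets of $V$ (the wrappings, with $\mathcal W\cap V=\emptyset$), and $\mathcal I$ maps each type $t$ to a subset $\mathcal I(t)\subseteq V$, each attribute $\mathsf P$ to a partial function $\mathcal I(\mathsf P)$ from $V$ to $V\cup\mathcal W$, each $m$-ary relation symbol $r$ to a subset of $(V\cup\mathcal W)^m$, and is a partial map from $\mathsf{NNAME}$ to $V$. The w-sets are the elements of $\hat{\mathcal W}=\mathcal W\cup\{V\setminus\bigcup\mathcal W\}$, a partition of $V$; $[v]$ denotes the w-set containing $v$. A model is $M=\langle F,g\rangle$ with $g=\langle g_N,g_W\rangle$, $g_N:\mathsf{NVAR}\rightharpoonup V$, $g_W:\mathsf{WVAR}\rightharpoonup\mathcal W$. Write $\mathcal I_g(b)=\mathcal I(b)$ for base-labels, $\mathcal I_g(x)=g_N(x)$,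 $\mathcal I_g(T)=g_W(T)$, and $\mathcal I_g(k,\varepsilon)=\mathcal I_g(k)$, $\mathcal I_g(k,p\mathsf Q)=\mathcal I(\mathsf Q)(\mathcal I_g(k,p))$ for attribute words $p\in\mathsf{ATTR}^*$ (partial). Models are required to satisfy: (reachability) for every $v\in V$ there are $k\in\mathsf{NLABEL}$ and $p\in\mathsf{ATTR}^*$ with $\mathcal I_g(k)\in[v]$ and $\mathcal I_g(k,p)=v$; (non-escapability) for every $W\in\mathcal W$, $v\in W$ and $p\in\mathsf{ATTR}^*$, if $\mathcal I(p)(v)$ is defined then it lies in $[v]$. A homomorphism $h:M\to M'$ is a pair $h_V:V\to V'\uplus\mathcal W'$, $h_{\mathcal W}:\mathcal W\to\mathcal W'$ such that, writing $h$ for both (and extending it to $V\cup\mathcal W$): $h(\mathcal I(t))\subseteq\mathcal I'(t)$ for all types; if $\mathcal I(\mathsf P)(v)$ is defined then $\mathcal I'(\mathsf P)(h(v))$ is defined and equals $h(\mathcal I(\mathsf P)(v))$; $h(\mathcal I(r))\subseteq\mathcal I'(r)$ for all relations; if $\mathcal I(b)$ is defined then $h(\mathcal I(b))=\mathcal I'(b)$; if $v\in W\in\mathcal W$ then $h_V(v)\in h_{\mathcal W}(W)$; if $g(x)$ is defined (for $x\in\mathsf{NVAR}\uplus\mathsf{WVAR}$) then $h(g(x))=g'(x)$. Subsumption: $M\sqsubseteq M'$ iff there is a homomorphism $M\to M'$. $K$ is a least upper bound of $\{M,M'\}$ if $M\sqsubseteq K$, $M'\sqsubseteq K$, and $K\sqsubseteq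 K''$ for every $K''$ with $M\sqsubseteq K''$ and $M'\sqsubseteq K''$. An isomorphism $\sigma:M\to M'$ is a homomorphism with $\sigma_V(V)\subseteq V'$, such that $\sigma_V:V\to V'$ and $\sigma_{\mathcal W}:\mathcal W\to\mathcal W'$ are bijections and $\sigma^{-1}=\langle\sigma_V^{-1},\sigma_{\mathcal W}^{-1}\rangle$ is a homomorphism $M'\to M$. *)

theory Defs
  imports Main
begin

(* Elements of V \<union> W: nodes and wrappings (disjoint by construction). *)
datatype 'v elem = Nd 'v | Wr "'v set"

(* A model <F, g>: FSW F = <V, W, I> together with the assignment g = <g_N, g_W>.
   'ty = TYPE, 'at = ATTR, 'rel = REL, 'nn = NNAME, 'nv = NVAR, 'wv = WVAR,
   'v = the ambient type of nodes. *)
record ('ty, 'at, 'rel, 'nn, 'nv, 'wv, 'v) model =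
  nodes :: "'v set"
  wraps :: "'v set set"
  tyI   :: "'ty \<Rightarrow> 'v set"
  atI   :: "'at \<Rightarrow> 'v \<Rightarrow> 'v elem option"
  relI  :: "'rel \<Rightarrow> 'v elem list set"
  nmI   :: "'nn \<Rightarrow> 'v option"
  gN    :: "'nv \<Rightarrow> 'v option"
  gW    :: "'wv \<Rightarrow> 'v set option"

definition elems :: "('ty, 'at, 'rel, 'nn, 'nv, 'wv, 'v) model \<Rightarrow> 'v elem set" where
  "elems M = Nd ` nodes M \<union> Wr ` wraps M"

definition wset :: "('ty, 'at, 'rel, 'nn, 'nv, 'wv, 'v) model \<Rightarrow> 'v \<Rightarrow> 'v set" where
  "wset M v = (if \<exists>W\<in>wraps M. v \<in> W then (THE W. W \<in> wraps M \<and> v \<in> W)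
               else nodes M - \<Union>(wraps M))"

(* I_g(k) for node labels k \<in> NLABEL = NNAME \<uplus> NVAR *)
fun lab :: "('ty, 'at, 'rel, 'nn, 'nv, 'wv, 'v) model \<Rightarrow> 'nn + 'nv \<Rightarrow> 'v option" where
  "lab M (Inl b) = nmI M b"
| "lab M (Inr x) = gN M x"

(* I(p)(v) for an attribute word p (read left to right), partial *)
fun apath :: "('ty, 'at, 'rel, 'nn, 'nv, 'wv, 'v) model \<Rightarrow> 'v \<Rightarrow> 'at list \<Rightarrow> 'v elem option" where
  "apath M v [] = Some (Nd v)"
| "apath M v (Q # p) =
     (case atI M Q v of
        None \<Rightarrow> None
      | Some (Nd u) \<Rightarrow> apath M u p
      | Some (Wr w) \<Rightarrow> (if p = [] then Some (Wr w) else None))"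

definition is_model :: "('rel \<Rightarrow> nat) \<Rightarrow> ('ty, 'at, 'rel, 'nn, 'nv, 'wv, 'v) model \<Rightarrow> bool" where
  "is_model ar M \<longleftrightarrow>
     nodes M \<noteq> {} \<and>
     (\<forall>W\<in>wraps M. W \<noteq> {} \<and> W \<subseteq> nodes M) \<and>
     (\<forall>W1\<in>wraps M. \<forall>W2\<in>wraps M. W1 \<noteq> W2 \<longrightarrow> W1 \<inter> W2 = {}) \<and>
     (\<forall>t. tyI M t \<subseteq> nodes M) \<and>
     (\<forall>P v x. atI M P v = Some x \<longrightarrow> v \<in> nodes M \<and> x \<in> elems M) \<and>
     (\<forall>r. \<forall>xs\<in>relI M r. length xs = ar r \<and> set xs \<subseteq> elems M) \<and>
     (\<forall>b v. nmI M b = Some v \<longrightarrow> v \<in> nodes M) \<and>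
     (\<forall>x v. gN M x = Some v \<longrightarrow> v \<in> nodes M) \<and>
     (\<forall>T W. gW M T = Some W \<longrightarrow> W \<in> wraps M) \<and>
     \<comment> \<open>reachability\<close>
     (\<forall>v\<in>nodes M. \<exists>k p u. lab M k = Some u \<and> u \<in> wset M v \<and> apath M u p = Some (Nd v)) \<and>
     \<comment> \<open>non-escapability\<close>
     (\<forall>W\<in>wraps M. \<forall>v\<in>W. \<forall>p x. apath M v p = Some x \<longrightarrow> x \<in> Nd ` wset M v)"

fun hext :: "('a \<Rightarrow> 'b elem) \<Rightarrow> ('a set \<Rightarrow> 'b set) \<Rightarrow> 'a elem \<Rightarrow> 'b elem" where
  "hext hV hW (Nd v) = hV v"
| "hext hV hW (Wr w) = Wr (hW w)"

definition is_hom ::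
  "('ty, 'at, 'rel, 'nn, 'nv, 'wv, 'a) model \<Rightarrow> ('ty, 'at, 'rel, 'nn, 'nv, 'wv, 'b) model \<Rightarrow>
   ('a \<Rightarrow> 'b elem) \<Rightarrow> ('a set \<Rightarrow> 'b set) \<Rightarrow> bool" where
  "is_hom M M' hV hW \<longleftrightarrow>
     (\<forall>v\<in>nodes M. hV v \<in> elems M') \<and>
     (\<forall>W\<in>wraps M. hW W \<in> wraps M') \<and>
     (\<forall>t. \<forall>v\<in>tyI M t. hV v \<in> Nd ` tyI M' t) \<and>
     (\<forall>P v x. atI M P v = Some x \<longrightarrow>
        (\<exists>u. hV v = Nd u \<and> atI M' P u = Some (hext hV hW x))) \<and>
     (\<forall>r. \<forall>xs\<in>relI M r. map (hext hV hW) xs \<in> relI M' r) \<and>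
     (\<forall>b v. nmI M b = Some v \<longrightarrow> (\<exists>u. nmI M' b = Some u \<and> hV v = Nd u)) \<and>
     (\<forall>W\<in>wraps M. \<forall>v\<in>W. \<exists>u. hV v = Nd u \<and> u \<in> hW W) \<and>
     (\<forall>x v. gN M x = Some v \<longrightarrow> (\<exists>u. gN M' x = Some u \<and> hV v = Nd u)) \<and>
     (\<forall>T W. gW M T = Some W \<longrightarrow> gW M' T = Some (hW W))"

definition subsumes ::
  "('ty, 'at, 'rel, 'nn, 'nv, 'wv, 'a) model \<Rightarrow> ('ty, 'at, 'rel, 'nn, 'nv, 'wv, 'b) model \<Rightarrow> bool"
  (infix "\<sqsubseteq>\<^sub>M" 50) where
  "M \<sqsubseteq>\<^sub>M M' \<longleftrightarrow> (\<exists>hV hW. is_hom M M' hV hW)"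

(* K is a least upper bound of {M, M'} among the models (over signature ar) with
   nodes drawn from the type 'v *)
definition is_lub ::
  "('rel \<Rightarrow> nat) \<Rightarrow> ('ty, 'at, 'rel, 'nn, 'nv, 'wv, 'a) model \<Rightarrow> ('ty, 'at, 'rel, 'nn, 'nv, 'wv, 'a) model \<Rightarrow>
   ('ty, 'at, 'rel, 'nn, 'nv, 'wv, 'v) model \<Rightarrow> bool" where
  "is_lub ar M M' K \<longleftrightarrow>
     M \<sqsubseteq>\<^sub>M K \<and> M' \<sqsubseteq>\<^sub>M K \<and>
     (\<forall>K'' :: ('ty, 'at, 'rel, 'nn, 'nv, 'wv, 'v) model.
        is_model ar K'' \<and> M \<sqsubseteq>\<^sub>M K'' \<and> M' \<sqsubseteq>\<^sub>M K'' \<longrightarrow> K \<sqsubseteq>\<^sub>M K'')"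

definition is_iso ::
  "('ty, 'at, 'rel, 'nn, 'nv, 'wv, 'a) model \<Rightarrow> ('ty, 'at, 'rel, 'nn, 'nv, 'wv, 'b) model \<Rightarrow>
   ('a \<Rightarrow> 'b) \<Rightarrow> ('a set \<Rightarrow> 'b set) \<Rightarrow> bool" where
  "is_iso M M' sV sW \<longleftrightarrow>
     bij_betw sV (nodes M) (nodes M') \<and> bij_betw sW (wraps M) (wraps M') \<and>
     is_hom M M' (Nd \<circ> sV) sW \<and>
     is_hom M' M (Nd \<circ> inv_into (nodes M) sV) (inv_into (wraps M) sW)"

definition isomorphic ::
  "('ty, 'at, 'rel, 'nn, 'nv, 'wv, 'a) model \<Rightarrow> ('ty, 'at, 'rel, 'nn, 'nv, 'wv, 'b) model \<Rightarrow> bool" where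
  "isomorphic M M' \<longleftrightarrow> (\<exists>sV sW. is_iso M M' sV sW)"

end

theory Submission
  imports Defs
begin

text \<open>Every node of a model is reached from a label along an attribute path, and a
homomorphism fixes labels and commutes with attributes; hence an endomorphism of a
model fixes every node, and then every wrapping, as wrappings are nonempty and
pairwise disjoint. Two least upper bounds subsume each other, so both composites of
the two homomorphisms are endomorphisms, i.e. identities, and the homomorphisms are
mutually inverse.\<close>

lemma is_homD:
  assumes "is_hom M M' hV hW"
  shows is_hom_elems: "v \<in> nodes M \<Longrightarrow> hV v \<in> elems M'"
    and is_hom_wraps: "W \<in> wraps M \<Longrightarrow> hW W \<in> wraps M'"
    and is_hom_tyI: "v \<in> tyI M t \<Longrightarrow> hV v \<in> Nd ` tyI M' t"
    and is_hom_atI: "atI M P v = Some x \<Longrightarrow> \<exists>u. hV v = Nd u \<and> atI M' P u = Some (hext hV hW x)"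
    and is_hom_relI: "xs \<in> relI M r \<Longrightarrow> map (hext hV hW) xs \<in> relI M' r"
    and is_hom_nmI: "nmI M b = Some v \<Longrightarrow> \<exists>u. nmI M' b = Some u \<and> hV v = Nd u"
    and is_hom_in_wrap: "W \<in> wraps M \<Longrightarrow> v \<in> W \<Longrightarrow> \<exists>u. hV v = Nd u \<and> u \<in> hW W"
    and is_hom_gN: "gN M y = Some v \<Longrightarrow> \<exists>u. gN M' y = Some u \<and> hV v = Nd u"
    and is_hom_gW: "gW M T = Some W \<Longrightarrow> gW M' T = Some (hW W)"
  using assms unfolding is_hom_def by simp_all

lemma is_modelD:
  assumes "is_model ar M"
  shows is_model_wrap_nonempty: "W \<in> wraps M \<Longrightarrow> W \<noteq> {}"
    and is_model_wrap_subset: "W \<in> wraps M \<Longrightarrow> W \<subseteq> nodes M"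
    and is_model_wraps_disjoint: "W1 \<in> wraps M \<Longrightarrow> W2 \<in> wraps M \<Longrightarrow> W1 \<noteq> W2 \<Longrightarrow> W1 \<inter> W2 = {}"
    and is_model_tyI: "tyI M t \<subseteq> nodes M"
    and is_model_atI: "atI M P v = Some x \<Longrightarrow> v \<in> nodes M \<and> x \<in> elems M"
    and is_model_relI: "xs \<in> relI M r \<Longrightarrow> set xs \<subseteq> elems M"
    and is_model_nmI: "nmI M b = Some v \<Longrightarrow> v \<in> nodes M"
    and is_model_gN: "gN M y = Some v \<Longrightarrow> v \<in> nodes M"
    and is_model_gW: "gW M T = Some W \<Longrightarrow> W \<in> wraps M"
    and is_model_reachable:
      "v \<in> nodes M \<Longrightarrow> \<exists>k p u. lab M k = Some u \<and> u \<in> wset M v \<and> apath M u p = Some (Nd v)"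
  using assms unfolding is_model_def by simp_all

lemma hext_hext: "hext gV kW (hext hV hW x) = hext (hext gV kW \<circ> hV) (kW \<circ> hW) x"
  by (cases x) auto

lemma hext_elems:
  assumes "is_hom M M' hV hW" and "x \<in> elems M"
  shows "hext hV hW x \<in> elems M'"
  using assms is_hom_elems is_hom_wraps unfolding elems_def by fastforce

lemma is_hom_comp:
  assumes h: "is_hom A B hV hW" and g: "is_hom B C gV kW"
  shows "is_hom A C (hext gV kW \<circ> hV) (kW \<circ> hW)"
  unfolding is_hom_def
proof (intro conjI allI ballI impI)
  fix v assume "v \<in> nodes A"
  then show "(hext gV kW \<circ> hV) v \<in> elems C"
    using hext_elems[OF g] is_hom_elems[OF h] by (metis comp_apply hext.simps(1))
next
  fix W assume "W \<in> wraps A"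
  then show "(kW \<circ> hW) W \<in> wraps C" using is_hom_wraps[OF h] is_hom_wraps[OF g] by simp
next
  fix t v assume "v \<in> tyI A t"
  then obtain u where "hV v = Nd u" "u \<in> tyI B t" using is_hom_tyI[OF h] by blast
  then show "(hext gV kW \<circ> hV) v \<in> Nd ` tyI C t" using is_hom_tyI[OF g] by simp
next
  fix P v x assume "atI A P v = Some x"
  then obtain u where u: "hV v = Nd u" "atI B P u = Some (hext hV hW x)"
    using is_hom_atI[OF h] by blast
  then obtain u' where "gV u = Nd u'" "atI C P u' = Some (hext gV kW (hext hV hW x))"
    using is_hom_atI[OF g] by blast
  then show "\<exists>u. (hext gV kW \<circ> hV) v = Nd u \<and>
      atI C P u = Some (hext (hext gV kW \<circ> hV) (kW \<circ> hW) x)"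
    using u by (simp add: hext_hext)
next
  fix r xs assume "xs \<in> relI A r"
  then have "map (hext gV kW) (map (hext hV hW) xs) \<in> relI C r"
    using is_hom_relI[OF h] is_hom_relI[OF g] by blast
  then show "map (hext (hext gV kW \<circ> hV) (kW \<circ> hW)) xs \<in> relI C r"
    by (simp add: hext_hext comp_def)
next
  fix b v assume "nmI A b = Some v"
  then obtain u where "nmI B b = Some u" "hV v = Nd u" using is_hom_nmI[OF h] by blast
  then show "\<exists>u. nmI C b = Some u \<and> (hext gV kW \<circ> hV) v = Nd u"
    using is_hom_nmI[OF g] by fastforce
next
  fix W v assume W: "W \<in> wraps A" and "v \<in> W"
  then obtain u where u: "hV v = Nd u" "u \<in> hW W" using is_hom_in_wrap[OF h] by blast
  moreover have "hW W \<in> wraps B" using is_hom_wraps[OF h W] .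
  ultimately obtain u' where "gV u = Nd u'" "u' \<in> kW (hW W)" using is_hom_in_wrap[OF g] by blast
  then show "\<exists>u. (hext gV kW \<circ> hV) v = Nd u \<and> u \<in> (kW \<circ> hW) W" using u by simp
next
  fix x v assume "gN A x = Some v"
  then obtain u where "gN B x = Some u" "hV v = Nd u" using is_hom_gN[OF h] by blast
  then show "\<exists>u. gN C x = Some u \<and> (hext gV kW \<circ> hV) v = Nd u"
    using is_hom_gN[OF g] by fastforce
next
  fix T W assume "gW A T = Some W"
  then show "gW C T = Some ((kW \<circ> hW) W)" using is_hom_gW[OF h] is_hom_gW[OF g] by simp
qed

lemma endo_fixes_apath_target:
  assumes e: "is_hom K K eV eW"
    and "apath K u p = Some (Nd v)" and "eV u = Nd u"
  shows "eV v = Nd v"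
  using assms(2,3)
proof (induction p arbitrary: u)
  case Nil
  then show ?case by simp
next
  case (Cons Q p)
  then obtain y where y: "atI K Q u = Some y" by (cases "atI K Q u") auto
  with Cons.prems(2) have y_fixed: "hext eV eW y = y" using is_hom_atI[OF e] by fastforce
  show ?case
  proof (cases y)
    case (Nd w)
    with Cons.prems(1) y y_fixed show ?thesis by (auto intro: Cons.IH)
  next
    case (Wr w)
    with Cons.prems(1) y show ?thesis by (simp split: if_splits)
  qed
qed

theorem endo_is_identity:
  assumes K: "is_model ar K" and e: "is_hom K K eV eW"
  shows "(\<forall>v\<in>nodes K. eV v = Nd v) \<and> (\<forall>W\<in>wraps K. eW W = W)"
proof -
  have labels_fixed: "eV u = Nd u" if "lab K k = Some u" for k u
    using that is_hom_nmI[OF e] is_hom_gN[OF e] by (cases k) fastforce+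
  have nodes_fixed: "\<forall>v\<in>nodes K. eV v = Nd v"
  proof
    fix v assume "v \<in> nodes K"
    then obtain k p u where "lab K k = Some u" "apath K u p = Some (Nd v)"
      using is_model_reachable[OF K] by blast
    then show "eV v = Nd v" using labels_fixed endo_fixes_apath_target[OF e] by blast
  qed
  moreover have "\<forall>W\<in>wraps K. eW W = W"
  proof
    fix W assume W: "W \<in> wraps K"
    then obtain v where v: "v \<in> W" using is_model_wrap_nonempty[OF K] by blast
    then have "v \<in> eW W"
      using is_hom_in_wrap[OF e W] nodes_fixed is_model_wrap_subset[OF K W] by fastforce
    with W v show "eW W = W"
      using is_hom_wraps[OF e W] is_model_wraps_disjoint[OF K] by blast
  qed
  ultimately show ?thesis ..
qed

lemma is_hom_cong:
  assumes A: "is_model ar A" and h: "is_hom A B hV hW"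
    and eqV: "\<And>v. v \<in> nodes A \<Longrightarrow> hV' v = hV v" and eqW: "\<And>W. W \<in> wraps A \<Longrightarrow> hW' W = hW W"
  shows "is_hom A B hV' hW'"
proof -
  have eq_elems: "hext hV' hW' x = hext hV hW x" if "x \<in> elems A" for x
    using that eqV eqW unfolding elems_def by auto
  show ?thesis
    unfolding is_hom_def
  proof (intro conjI allI ballI impI)
    fix v assume "v \<in> nodes A"
    then show "hV' v \<in> elems B" using is_hom_elems[OF h] eqV by simp
  next
    fix W assume "W \<in> wraps A"
    then show "hW' W \<in> wraps B" using is_hom_wraps[OF h] eqW by simp
  next
    fix t v assume v: "v \<in> tyI A t"
    then have "v \<in> nodes A" using is_model_tyI[OF A] by blast
    then show "hV' v \<in> Nd ` tyI B t" using is_hom_tyI[OF h v] eqV by simp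
  next
    fix P v x assume a: "atI A P v = Some x"
    then show "\<exists>u. hV' v = Nd u \<and> atI B P u = Some (hext hV' hW' x)"
      using is_hom_atI[OF h a] is_model_atI[OF A a] eqV eq_elems by auto
  next
    fix r xs assume a: "xs \<in> relI A r"
    then have "map (hext hV' hW') xs = map (hext hV hW) xs"
      using is_model_relI[OF A] eq_elems by (auto intro!: map_cong)
    then show "map (hext hV' hW') xs \<in> relI B r" using is_hom_relI[OF h a] by (simp only:)
  next
    fix b v assume a: "nmI A b = Some v"
    then show "\<exists>u. nmI B b = Some u \<and> hV' v = Nd u"
      using is_hom_nmI[OF h a] is_model_nmI[OF A a] eqV by auto
  next
    fix W v assume W: "W \<in> wraps A" and "v \<in> W"
    then show "\<exists>u. hV' v = Nd u \<and> u \<in> hW' W"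
      using is_hom_in_wrap[OF h W] is_model_wrap_subset[OF A W] eqV eqW by auto
  next
    fix x v assume a: "gN A x = Some v"
    then show "\<exists>u. gN B x = Some u \<and> hV' v = Nd u"
      using is_hom_gN[OF h a] is_model_gN[OF A a] eqV by auto
  next
    fix T W assume a: "gW A T = Some W"
    then show "gW B T = Some (hW' W)" using is_hom_gW[OF h a] is_model_gW[OF A a] eqW by auto
  qed
qed

fun node_of :: "'v elem \<Rightarrow> 'v" where
  "node_of (Nd v) = v"

lemma retracted_elem_is_node:
  assumes "x \<in> elems M" and "hext gV kW x = Nd v"
  shows "x = Nd (node_of x) \<and> node_of x \<in> nodes M"
  using assms unfolding elems_def by auto

lemma inverse_homs_is_iso:
  assumes K: "is_model ar K" and K': "is_model ar K'"
    and h: "is_hom K K' hV hW" and g: "is_hom K' K gV kW"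
    and ghV: "\<forall>v\<in>nodes K. hext gV kW (hV v) = Nd v" and ghW: "\<forall>W\<in>wraps K. kW (hW W) = W"
    and hgV: "\<forall>v\<in>nodes K'. hext hV hW (gV v) = Nd v" and hgW: "\<forall>W\<in>wraps K'. hW (kW W) = W"
  shows "is_iso K K' (node_of \<circ> hV) hW"
proof -
  define sV where "sV = node_of \<circ> hV"
  define tV where "tV = node_of \<circ> gV"
  have sV: "hV v = Nd (sV v) \<and> sV v \<in> nodes K'" if "v \<in> nodes K" for v
    using retracted_elem_is_node is_hom_elems[OF h that] ghV that unfolding sV_def by fastforce
  have tV: "gV v = Nd (tV v) \<and> tV v \<in> nodes K" if "v \<in> nodes K'" for v
    using retracted_elem_is_node is_hom_elems[OF g that] hgV that unfolding tV_def by fastforce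
  have tV_sV: "tV (sV v) = v" if "v \<in> nodes K" for v
    using ghV sV[OF that] tV that by fastforce
  have sV_tV: "sV (tV v) = v" if "v \<in> nodes K'" for v
    using hgV tV[OF that] sV that by fastforce
  have bij_nodes: "bij_betw sV (nodes K) (nodes K')"
    by (rule bij_betw_byWitness[where f' = tV]) (use tV_sV sV_tV sV tV in auto)
  have bij_wraps: "bij_betw hW (wraps K) (wraps K')"
    by (rule bij_betw_byWitness[where f' = kW])
      (use ghW hgW is_hom_wraps[OF h] is_hom_wraps[OF g] in auto)
  have inv_nodes: "inv_into (nodes K) sV v = tV v" if "v \<in> nodes K'" for v
    using bij_betw_inv_into_left[OF bij_nodes] tV[OF that] sV_tV[OF that] by metis
  have inv_wraps: "inv_into (wraps K) hW W = kW W" if "W \<in> wraps K'" for W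
    using bij_betw_inv_into_left[OF bij_wraps] is_hom_wraps[OF g that] hgW that by metis
  have "is_hom K K' (Nd \<circ> sV) hW"
    by (rule is_hom_cong[OF K h]) (use sV in auto)
  moreover have "is_hom K' K (Nd \<circ> inv_into (nodes K) sV) (inv_into (wraps K) hW)"
    by (rule is_hom_cong[OF K' g]) (use tV inv_nodes inv_wraps in auto)
  ultimately show ?thesis
    unfolding is_iso_def sV_def[symmetric] using bij_nodes bij_wraps by blast
qed

theorem subsumes_antisym_isomorphic:
  assumes K: "is_model ar K" and K': "is_model ar K'"
    and "K \<sqsubseteq>\<^sub>M K'" and "K' \<sqsubseteq>\<^sub>M K"
  shows "isomorphic K K'"
proof -
  obtain hV hW gV kW where h: "is_hom K K' hV hW" and g: "is_hom K' K gV kW"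
    using assms(3,4) unfolding subsumes_def by blast
  have "(\<forall>v\<in>nodes K. hext gV kW (hV v) = Nd v) \<and> (\<forall>W\<in>wraps K. kW (hW W) = W)"
    using endo_is_identity[OF K is_hom_comp[OF h g]] by simp
  moreover have "(\<forall>v\<in>nodes K'. hext hV hW (gV v) = Nd v) \<and> (\<forall>W\<in>wraps K'. hW (kW W) = W)"
    using endo_is_identity[OF K' is_hom_comp[OF g h]] by simp
  ultimately have "is_iso K K' (node_of \<circ> hV) hW"
    using inverse_homs_is_iso[OF K K' h g] by blast
  then show ?thesis unfolding isomorphic_def by blast
qed

theorem mainTheorem4:
  fixes ar :: "'rel \<Rightarrow> nat"
    and M M' :: "('ty::finite, 'at::finite, 'rel, 'nn, 'nv, 'wv, 'a) model"
    and K K' :: "('ty, 'at, 'rel, 'nn, 'nv, 'wv, 'v) model"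
  assumes "\<forall>r. 1 < ar r"
    and "is_model ar M" and "is_model ar M'"
    and "is_model ar K" and "is_model ar K'"
    and "is_lub ar M M' K" and "is_lub ar M M' K'"
  shows "isomorphic K K'"
proof (rule subsumes_antisym_isomorphic[OF assms(4,5)])
  show "K \<sqsubseteq>\<^sub>M K'" using assms(5,6,7) unfolding is_lub_def by blast
  show "K' \<sqsubseteq>\<^sub>M K" using assms(4,6,7) unfolding is_lub_def by blast
qed

end
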